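(* Let $E$ be a real or complex Banach space, $T$ a strongly continuous semigroup on $E$, $\mathcal U$ a countably incomplete ultrafilter on a set $I$, and ${}^*$ the corresponding bounded ultrapower. With $\Phi:\ell^\infty_I(E)/c_{\mathcal U}\to\widehat E$, $\Phi(\langle f_i\rangle+c_{\mathcal U})=\widehat f$ ($f$ the $\mathcal U$-class of $\langle f_i\rangle$), and $\iota: m^T/(c_{\mathcal U}\cap m^T)\to\ell^\infty_I(E)/c_{\mathcal U}$, $\iota(\langle f_i\rangle+c_{\mathcal U}\cap m^T)=\langle f_i\rangle+c_{\mathcal U}$, we have $\Phi(\iota(m^T/(c_{\mathcal U}\cap m^T)))\subseteq\widehat E_T$.
   Context: A semigroup is a map $T:[0,\infty)\to\mathcal L(E)$ with $T(0)=\mathrm{Id}$, $T(s+t)=T(s)T(t)$; strongly continuous means $\lim_{t\to0}\|T(t)f-f\|=0$ for all $f$. $\ell^\infty_I(E)$: bounded families in $E$ with sup-norm; $c_{\mathcal U}$: families such that for every $\varepsilon>0$ some $J\in\mathcal U$ has $\|f_i\|<\varepsilon$ for $i\in J$; $\tilde T(t)\langle f_i\rangle=\langle T(t)f_i\rangle$; $m^T=\{x\in\ell^\infty_I(E):\lim_{t\to0}\|\tilde T(t)x-x\|=0\}$. In the bounded ultrapower ${}^*E$ consists of $\mathcal U$-classes of $I$-sequences in $E$. A nonstandard element is finite if its norm is bounded by a standard natural number, infinitesimal if its norm is below every standard $1/n$. $\widehat E=\mathrm{fin}({}^*E)/E_0$ (finite elements modulo infinitesimal ones), with class map $f\mapsto\widehat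 f$. $E_T$ is the set of finite $f\in{}^*E$ such that for every standard $\varepsilon>0$ there is standard $\delta>0$ with $\|{}^*T(t)f-f\|<\varepsilon$ for all positive nonstandard $t<\delta$ (equivalently $\|{}^*T(h)f-f\|$ infinitesimal for all positive infinitesimal $h$); $\widehat E_T=E_T/E_0$. *)

theory Defs
  imports "HOL-Analysis.Analysis"
begin

text \<open>Strongly continuous semigroup of bounded operators on a Banach space.
  Operators are real-linear; a complex Banach space with complex-linear operators is a special case.\<close>
definition strongly_continuous_semigroup :: "(real \<Rightarrow> 'a::banach \<Rightarrow> 'a) \<Rightarrow> bool" where
  "strongly_continuous_semigroup T \<longleftrightarrow>
     (\<forall>t\<ge>0. bounded_linear (T t)) \<and> T 0 = id \<and>
     (\<forall>s\<ge>0. \<forall>t\<ge>0. T (s + t) = T s \<circ> T t) \<and>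
     (\<forall>f. ((\<lambda>t. T t f) \<longlongrightarrow> f) (at_right 0))"

definition ultrafilter_on :: "'i filter \<Rightarrow> bool" where
  "ultrafilter_on U \<longleftrightarrow> U \<noteq> bot \<and> (\<forall>P. eventually P U \<or> eventually (\<lambda>i. \<not> P i) U)"

definition countably_incomplete :: "'i filter \<Rightarrow> bool" where
  "countably_incomplete U \<longleftrightarrow> (\<exists>J :: nat \<Rightarrow> 'i set. (\<forall>n. eventually (\<lambda>i. i \<in> J n) U) \<and> (\<Inter>n. J n) = {})"

text \<open>Elements of the ultrapower are represented by I-sequences; all notions below
  are invariant under U-equivalence of representatives.\<close>
definition ns_finite :: "'i filter \<Rightarrow> ('i \<Rightarrow> 'a::real_normed_vector) \<Rightarrow> bool" where
  "ns_finite U f \<longleftrightarrow> (\<exists>n::nat. eventually (\<lambda>i. norm (f i) \<le> real n) U)"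

definition ns_infinitesimal :: "'i filter \<Rightarrow> ('i \<Rightarrow> 'a::real_normed_vector) \<Rightarrow> bool" where
  "ns_infinitesimal U f \<longleftrightarrow> (\<forall>n::nat. n > 0 \<longrightarrow> eventually (\<lambda>i. norm (f i) < 1 / real n) U)"

definition E_T :: "'i filter \<Rightarrow> (real \<Rightarrow> 'a::real_normed_vector \<Rightarrow> 'a) \<Rightarrow> ('i \<Rightarrow> 'a) \<Rightarrow> bool" where
  "E_T U T f \<longleftrightarrow> ns_finite U f \<and>
     (\<forall>\<epsilon>>0. \<exists>\<delta>>0. \<forall>t :: 'i \<Rightarrow> real.
        eventually (\<lambda>i. 0 < t i \<and> t i < \<delta>) U \<longrightarrow>
        eventually (\<lambda>i. norm (T (t i) (f i) - f i) < \<epsilon>) U)"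

text \<open>hat f lies in hat E_T = E_T / E_0.\<close>
definition hat_E_T :: "'i filter \<Rightarrow> (real \<Rightarrow> 'a::real_normed_vector \<Rightarrow> 'a) \<Rightarrow> ('i \<Rightarrow> 'a) \<Rightarrow> bool" where
  "hat_E_T U T f \<longleftrightarrow> (\<exists>g. E_T U T g \<and> ns_infinitesimal U (\<lambda>i. f i - g i))"

definition mT :: "(real \<Rightarrow> 'a::real_normed_vector \<Rightarrow> 'a) \<Rightarrow> ('i \<Rightarrow> 'a) \<Rightarrow> bool" where
  "mT T f \<longleftrightarrow> bounded (range f) \<and>
     ((\<lambda>t. SUP i. norm (T t (f i) - f i)) \<longlongrightarrow> 0) (at_right 0)"

end

theory Submission
  imports Defs
begin

text \<open>A family \<open>f\<close> in \<open>m\<^sup>T\<close> is bounded, so its class is finite, and the uniform estimate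
  \<open>sup\<^sub>i \<parallel>T(t) f\<^sub>i - f\<^sub>i\<parallel> < \<epsilon>\<close> for \<open>0 < t < \<delta>\<close> holds in particular at every index
  \<open>i\<close> with \<open>t = t\<^sub>i\<close>; hence the class of \<open>f\<close> itself lies in \<open>E\<^sub>T\<close>, and \<open>f\<close>
  represents a point of \<open>E\<^sub>T / E\<^sub>0\<close>.\<close>

lemma ns_finite_if_bounded_range:
  assumes "bounded (range f)"
  shows "ns_finite U f"
proof -
  obtain B where B: "\<And>i. norm (f i) \<le> B"
    using assms by (meson bounded_iff rangeI)
  obtain n :: nat where "B \<le> real n"
    using real_arch_simple by blast
  with B have "\<forall>i. norm (f i) \<le> real n"
    using order_trans by blast
  then show ?thesis
    unfolding ns_finite_def by (auto intro!: exI[of _ n])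
qed

lemma ns_infinitesimal_diff_self: "ns_infinitesimal U (\<lambda>i. f i - f i)"
  unfolding ns_infinitesimal_def by simp

lemma bdd_above_norm_diff_bounded_linear:
  fixes f :: "'i \<Rightarrow> 'a::real_normed_vector"
  assumes "bounded_linear L" and "bounded (range f)"
  shows "bdd_above (range (\<lambda>i. norm (L (f i) - f i)))"
proof -
  have "bounded_linear (\<lambda>x. L x - x)"
    using assms(1) bounded_linear_ident by (rule bounded_linear_sub)
  then have "bounded ((\<lambda>x. L x - x) ` range f)"
    using assms(2) by (intro bounded_linear_image)
  then show ?thesis
    by (simp add: bdd_above_norm[symmetric] image_image)
qed

lemma E_T_if_mT:
  assumes bounded_op: "\<And>t. t \<ge> 0 \<Longrightarrow> bounded_linear (T t)"
    and "mT T f"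
  shows "E_T U T f"
  unfolding E_T_def
proof (intro conjI allI impI)
  have bounded_f: "bounded (range f)"
    and uniform_lim: "((\<lambda>t. SUP i. norm (T t (f i) - f i)) \<longlongrightarrow> 0) (at_right 0)"
    using \<open>mT T f\<close> unfolding mT_def by auto
  show "ns_finite U f"
    using bounded_f by (rule ns_finite_if_bounded_range)
  fix \<epsilon> :: real
  assume "\<epsilon> > 0"
  with uniform_lim have "eventually (\<lambda>t. dist (SUP i. norm (T t (f i) - f i)) 0 < \<epsilon>) (at_right 0)"
    by (rule tendstoD)
  then obtain \<delta> where "\<delta> > 0"
    and sup_small: "\<And>t. 0 < t \<Longrightarrow> t < \<delta> \<Longrightarrow> (SUP i. norm (T t (f i) - f i)) < \<epsilon>"
    unfolding eventually_at_right_field by (auto simp: dist_real_def abs_less_iff)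
  have pointwise_small: "norm (T t (f i) - f i) < \<epsilon>" if "0 < t" "t < \<delta>" for t i
  proof -
    have "norm (T t (f i) - f i) \<le> (SUP j. norm (T t (f j) - f j))"
      using bdd_above_norm_diff_bounded_linear[OF bounded_op bounded_f] \<open>0 < t\<close>
      by (intro cSUP_upper) auto
    also have "\<dots> < \<epsilon>"
      using sup_small that .
    finally show ?thesis .
  qed
  show "\<exists>\<delta>>0. \<forall>t. eventually (\<lambda>i. 0 < t i \<and> t i < \<delta>) U \<longrightarrow>
      eventually (\<lambda>i. norm (T (t i) (f i) - f i) < \<epsilon>) U"
    using \<open>\<delta> > 0\<close> pointwise_small by (blast intro: eventually_mono)
qed

lemma hat_E_T_if_E_T: "E_T U T f \<Longrightarrow> hat_E_T U T f"
  unfolding hat_E_T_def using ns_infinitesimal_diff_self by blast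

theorem mainTheorem10:
  fixes T :: "real \<Rightarrow> 'a::banach \<Rightarrow> 'a" and U :: "'i filter"
  assumes "strongly_continuous_semigroup T"
    and "ultrafilter_on U" and "countably_incomplete U"
  shows "\<forall>f :: 'i \<Rightarrow> 'a. mT T f \<longrightarrow> hat_E_T U T f"
proof (intro allI impI)
  fix f :: "'i \<Rightarrow> 'a"
  assume "mT T f"
  have "\<And>t. t \<ge> 0 \<Longrightarrow> bounded_linear (T t)"
    using assms(1) unfolding strongly_continuous_semigroup_def by auto
  then have "E_T U T f"
    using \<open>mT T f\<close> by (rule E_T_if_mT)
  then show "hat_E_T U T f"
    by (rule hat_E_T_if_E_T)
qed

end
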